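(* Let $T$ be the closed isosceles trapezoid in the Euclidean plane whose parallel sides have lengths $1100$ and $1000$ and whose two legs each have length $600$. Then there exist $510$ closed rectangles, each of size $40\times 30$, all contained in $T$ and with pairwise disjoint interiors.
   Context: Rectangles may be placed at any position and with any orientation in the plane (they need not be axis-parallel). This is the paper's packing solution to Alcuin's quadrangular city problem (a city with sides $1100$, $1000$, $600$, $600$ feet, houses $40\times 30$ feet), interpreting the city as an isosceles trapezium. *)

theory Defs
  imports "HOL-Analysis.Analysis"
begin

text \<open>The closed isosceles trapezium with parallel sides 1100 (bottom) and 1000 (top)
  and legs of length 600. Height h satisfies 50^2 + h^2 = 600^2.\<close>

definition trap_height :: real where
  "trap_height = sqrt (600^2 - 50^2)"

definition trapezium :: "(real \<times> real) set" where
  "trapezium = convex hull {(0, 0), (1100, 0), (1050, trap_height), (50, trap_height)}"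

text \<open>The closed rectangle of size 40 x 30 with one corner at p, whose side of
  length 40 has direction angle \<theta> (arbitrary position and orientation).\<close>

definition house :: "real \<times> real \<Rightarrow> real \<Rightarrow> (real \<times> real) set" where
  "house p \<theta> = {(fst p + s * cos \<theta> - t * sin \<theta>, snd p + s * sin \<theta> + t * cos \<theta>) | s t.
                    0 \<le> s \<and> s \<le> 40 \<and> 0 \<le> t \<and> t \<le> 30}"

end

theory Submission imports Defs begin

text \<open>Stack 17 horizontal rows of houses, of heights 30 (houses lying flat) or 40 (houses
  standing upright), from the base of the trapezium up to height 590 < 597.9 \<le> trap_height.
  Each row is centred and as long as fits between the legs at the height of its top edge,
  where a leg has run inward by 50/trap_height per unit of height.\<close>

lemma trap_height_ge: "5979/10 \<le> trap_height"
  unfolding trap_height_def by (rule real_le_rsqrt) (simp add: power2_eq_square)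

lemma mem_trapezium:
  assumes "0 \<le> y" "y \<le> trap_height"
    and "50 * y \<le> trap_height * x" "50 * y \<le> trap_height * (1100 - x)"
  shows "(x, y) \<in> trapezium"
proof -
  define h where "h = trap_height"
  have "h > 0" using trap_height_ge by (simp add: h_def)
  define a where "a = y / h"
  have a: "0 \<le> a" "a \<le> 1" "y = a * h"
    using assms \<open>h > 0\<close> by (auto simp: a_def h_def)
  let ?C = "convex hull {(0::real, 0::real), (1100, 0), (1050, h), (50, h)}"
  have corners: "(0, 0) \<in> ?C" "(1100, 0) \<in> ?C" "(1050, h) \<in> ?C" "(50, h) \<in> ?C"
    by (auto intro: hull_inc)
  have left: "(50 * a, y) \<in> ?C"
    using convexD[OF convex_convex_hull corners(1) corners(4), of "1 - a" a] a
    by (simp add: mult.commute)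
  have right: "(1100 - 50 * a, y) \<in> ?C"
    using convexD[OF convex_convex_hull corners(2) corners(3), of "1 - a" a] a
    by (simp add: algebra_simps)
  have "h * (50 * a) \<le> h * x" "h * (50 * a) \<le> h * (1100 - x)"
    using assms(3,4) a(3) by (simp_all add: h_def algebra_simps)
  then have x: "50 * a \<le> x" "x \<le> 1100 - 50 * a"
    using \<open>h > 0\<close> by simp_all
  define m where "m = (x - 50 * a) / (1100 - 100 * a)"
  have den: "1100 - 100 * a > 0" using a by simp
  have m: "0 \<le> m" "m \<le> 1" "m * (1100 - 100 * a) = x - 50 * a"
    using den x by (auto simp: m_def field_simps)
  have "(1 - m) *\<^sub>R (50 * a, y) + m *\<^sub>R (1100 - 50 * a, y) \<in> ?C"
    using convexD[OF convex_convex_hull left right, of "1 - m" m] m by simp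
  moreover have "(1 - m) *\<^sub>R (50 * a, y) + m *\<^sub>R (1100 - 50 * a, y) = (x, y)"
    using m(3) by (simp add: algebra_simps)
  ultimately show ?thesis unfolding trapezium_def h_def by simp
qed

lemma box_subset_trapezium:
  assumes "0 \<le> Y" "0 \<le> d" "Y + d \<le> 5979/10" "0 \<le> w"
    and "50 * (Y + d) \<le> 5979/10 * X" "50 * (Y + d) \<le> 5979/10 * (1100 - X - w)"
  shows "{X..X + w} \<times> {Y..Y + d} \<subseteq> trapezium"
proof safe
  fix x y assume x: "x \<in> {X..X + w}" and y: "y \<in> {Y..Y + d}"
  have "X \<ge> 0" using assms by simp
  show "(x, y) \<in> trapezium"
  proof (rule mem_trapezium)
    show "0 \<le> y" "y \<le> trap_height" using x y assms trap_height_ge by auto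
    have "50 * y \<le> 5979/10 * x" using x y assms by auto
    also have "\<dots> \<le> trap_height * x"
      using trap_height_ge x \<open>X \<ge> 0\<close> by (intro mult_right_mono) auto
    finally show "50 * y \<le> trap_height * x" .
    have "50 * y \<le> 5979/10 * (1100 - x)" using x y assms by auto
    also have "\<dots> \<le> trap_height * (1100 - x)"
      using trap_height_ge x assms by (intro mult_right_mono) auto
    finally show "50 * y \<le> trap_height * (1100 - x)" .
  qed
qed

lemma house_angle_0: "house (a, b) 0 = {a..a + 40} \<times> {b..b + 30}"
proof
  show "house (a, b) 0 \<subseteq> {a..a + 40} \<times> {b..b + 30}" unfolding house_def by auto
  show "{a..a + 40} \<times> {b..b + 30} \<subseteq> house (a, b) 0"
  proof clarify
    fix x y assume "x \<in> {a..a + 40}" "y \<in> {b..b + 30}"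
    then show "(x, y) \<in> house (a, b) 0"
      unfolding house_def by (intro CollectI exI[of _ "x - a"] exI[of _ "y - b"]) auto
  qed
qed

lemma house_angle_pi_half: "house (a, b) (pi/2) = {a - 30..a} \<times> {b..b + 40}"
proof
  show "house (a, b) (pi/2) \<subseteq> {a - 30..a} \<times> {b..b + 40}" unfolding house_def by auto
  show "{a - 30..a} \<times> {b..b + 40} \<subseteq> house (a, b) (pi/2)"
  proof clarify
    fix x y assume "x \<in> {a - 30..a}" "y \<in> {b..b + 40}"
    then show "(x, y) \<in> house (a, b) (pi/2)"
      unfolding house_def by (intro CollectI exI[of _ "y - b"] exI[of _ "a - x"]) auto
  qed
qed

lemma interior_boxes_disjoint:
  assumes "a2 \<le> c1 \<or> c2 \<le> a1 \<or> b2 \<le> d1 \<or> d2 \<le> b1"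
  shows "interior ({a1..a2::real} \<times> {b1..b2::real}) \<inter> interior ({c1..c2} \<times> {d1..d2}) = {}"
  using assms by (auto simp: interior_Times)

lemma packing_reindex:
  fixes p :: "'a \<Rightarrow> real \<times> real" and \<theta> :: "'a \<Rightarrow> real"
  assumes "finite S" "card S = n"
    and "\<And>s. s \<in> S \<Longrightarrow> house (p s) (\<theta> s) \<subseteq> K"
    and "\<And>s s'. s \<in> S \<Longrightarrow> s' \<in> S \<Longrightarrow> s \<noteq> s' \<Longrightarrow>
           interior (house (p s) (\<theta> s)) \<inter> interior (house (p s') (\<theta> s')) = {}"
  shows "\<exists>(q :: nat \<Rightarrow> real \<times> real) (\<phi> :: nat \<Rightarrow> real).
           (\<forall>i<n. house (q i) (\<phi> i) \<subseteq> K) \<and>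
           (\<forall>i<n. \<forall>j<n. i \<noteq> j \<longrightarrow>
              interior (house (q i) (\<phi> i)) \<inter> interior (house (q j) (\<phi> j)) = {})"
proof -
  obtain g where g: "bij_betw g {..<n} S"
    using ex_bij_betw_nat_finite[OF assms(1)] assms(2) by (auto simp: atLeast0LessThan)
  have "g i \<in> S" if "i < n" for i using g that by (auto dest: bij_betw_apply)
  moreover have "g i \<noteq> g j" if "i < n" "j < n" "i \<noteq> j" for i j
    using g that by (auto simp: bij_betw_def inj_on_def)
  ultimately show ?thesis
    using assms(3,4) by (intro exI[of _ "p \<circ> g"] exI[of _ "\<theta> \<circ> g"]) auto
qed

lemma sum_list_take_nth_le:
  fixes xs :: "real list"
  assumes "\<forall>x\<in>set xs. 0 \<le> x" "r < r'" "r < length xs"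
  shows "sum_list (take r xs) + xs ! r \<le> sum_list (take r' xs)"
proof -
  have step: "sum_list (take n xs) \<le> sum_list (take (Suc n) xs)" for n
    using assms(1) by (cases "n < length xs") (auto simp: take_Suc_conv_app_nth)
  have "sum_list (take r xs) + xs ! r = sum_list (take (Suc r) xs)"
    using assms(3) by (simp add: take_Suc_conv_app_nth)
  also have "\<dots> \<le> sum_list (take r' xs)"
    using assms(2) lift_Suc_mono_le[of "\<lambda>n. sum_list (take n xs)", OF step] by simp
  finally show ?thesis .
qed

definition row_heights :: "real list" where
  "row_heights = [40, 40, 30, 40, 40, 40, 30, 30, 30, 30, 40, 40, 40, 30, 30, 30, 30]"

definition row_counts :: "nat list" where
  "row_counts = [36, 36, 27, 35, 35, 35, 26, 26, 26, 26, 34, 34, 34, 25, 25, 25, 25]"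

definition row_base :: "nat \<Rightarrow> real" where
  "row_base r = sum_list (take r row_heights)"

definition slot_width :: "nat \<Rightarrow> real" where
  "slot_width r = 70 - row_heights ! r"

definition row_start :: "nat \<Rightarrow> real" where
  "row_start r = (1100 - real (row_counts ! r) * slot_width r) / 2"

definition slots :: "(nat \<times> nat) set" where
  "slots = Sigma {..<17} (\<lambda>r. {..<row_counts ! r})"

definition slot_left :: "nat \<Rightarrow> nat \<Rightarrow> real" where
  "slot_left r k = row_start r + real k * slot_width r"

fun slot_box :: "nat \<times> nat \<Rightarrow> (real \<times> real) set" where
  "slot_box (r, k) =
     {slot_left r k..slot_left r k + slot_width r} \<times> {row_base r..row_base r + row_heights ! r}"

fun slot_corner :: "nat \<times> nat \<Rightarrow> real \<times> real" where
  "slot_corner (r, k) =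
     (if row_heights ! r = 30 then (slot_left r k, row_base r) else (slot_left r k + 30, row_base r))"

fun slot_angle :: "nat \<times> nat \<Rightarrow> real" where
  "slot_angle (r, k) = (if row_heights ! r = 30 then 0 else pi/2)"

lemma row_heights_nonneg: "\<forall>x\<in>set row_heights. 0 \<le> x"
  by (simp add: row_heights_def)

lemma card_slots: "card slots = 510"
  unfolding slots_def by (simp add: lessThan_nat_numeral row_counts_def)

lemma row_fits:
  assumes "r < 17"
  shows "(row_heights ! r = 30 \<or> row_heights ! r = 40) \<and>
         row_base r + row_heights ! r \<le> 5979/10 \<and>
         50 * (row_base r + row_heights ! r) \<le> 5979/10 * row_start r"
proof -
  have "\<forall>r\<in>{..<17}. (row_heights ! r = 30 \<or> row_heights ! r = 40) \<and>
          row_base r + row_heights ! r \<le> 5979/10 \<and>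
          50 * (row_base r + row_heights ! r) \<le> 5979/10 * row_start r"
    by (simp add: lessThan_nat_numeral row_base_def row_start_def slot_width_def
        row_heights_def row_counts_def)
  then show ?thesis using assms by blast
qed

lemma slot_left_bounds:
  assumes "r < 17" "k < row_counts ! r"
  shows "row_start r \<le> slot_left r k"
    and "slot_left r k + slot_width r \<le> 1100 - row_start r"
proof -
  have w: "0 \<le> slot_width r" using row_fits[OF assms(1)] by (auto simp: slot_width_def)
  then show "row_start r \<le> slot_left r k" by (simp add: slot_left_def)
  have "(real k + 1) * slot_width r \<le> real (row_counts ! r) * slot_width r"
    using assms(2) w by (intro mult_right_mono) auto
  then show "slot_left r k + slot_width r \<le> 1100 - row_start r"
    by (simp add: slot_left_def row_start_def field_simps)
qed

lemma house_slot:
  assumes "s \<in> slots"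
  shows "house (slot_corner s) (slot_angle s) = slot_box s"
proof -
  obtain r k where s: "s = (r, k)" "r < 17" using assms by (cases s) (auto simp: slots_def)
  then show ?thesis
    using row_fits[OF s(2)] by (auto simp: house_angle_0 house_angle_pi_half slot_width_def)
qed

lemma slot_box_subset_trapezium:
  assumes "s \<in> slots"
  shows "slot_box s \<subseteq> trapezium"
proof -
  obtain r k where s: "s = (r, k)" "r < 17" "k < row_counts ! r"
    using assms by (cases s) (auto simp: slots_def)
  note fits = row_fits[OF s(2)] and bounds = slot_left_bounds[OF s(2,3)]
  have base: "0 \<le> row_base r"
    unfolding row_base_def using row_heights_nonneg
    by (intro sum_list_nonneg) (auto dest: in_set_takeD)
  have "50 * (row_base r + row_heights ! r) \<le> 5979/10 * row_start r"
    using fits by blast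
  then show ?thesis
    unfolding s slot_box.simps using fits bounds base
    by (intro box_subset_trapezium) (auto simp: slot_width_def)
qed

lemma slot_boxes_interior_disjoint_ordered:
  assumes "(r, k) \<in> slots" "(r', k') \<in> slots" "r < r' \<or> (r = r' \<and> k < k')"
  shows "interior (slot_box (r, k)) \<inter> interior (slot_box (r', k')) = {}"
  using assms(3)
proof
  assume "r < r'"
  then have "row_base r + row_heights ! r \<le> row_base r'"
    using assms(1) row_heights_nonneg unfolding row_base_def
    by (intro sum_list_take_nth_le) (auto simp: slots_def row_heights_def)
  then show ?thesis unfolding slot_box.simps by (intro interior_boxes_disjoint) auto
next
  assume same: "r = r' \<and> k < k'"
  have "0 \<le> slot_width r"
    using assms(1) row_fits[of r] by (auto simp: slots_def slot_width_def)
  then have "(real k + 1) * slot_width r \<le> real k' * slot_width r"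
    using same by (intro mult_right_mono) auto
  then have "slot_left r k + slot_width r \<le> slot_left r' k'"
    using same by (simp add: slot_left_def algebra_simps)
  then show ?thesis unfolding slot_box.simps by (intro interior_boxes_disjoint) auto
qed

lemma slot_boxes_interior_disjoint:
  assumes "s \<in> slots" "s' \<in> slots" "s \<noteq> s'"
  shows "interior (slot_box s) \<inter> interior (slot_box s') = {}"
proof -
  obtain r k r' k' where s: "s = (r, k)" "s' = (r', k')" by (cases s, cases s')
  then consider "r < r' \<or> (r = r' \<and> k < k')" | "r' < r \<or> (r' = r \<and> k' < k)"
    using assms(3) by fastforce
  then show ?thesis
    using slot_boxes_interior_disjoint_ordered assms(1,2) unfolding s by cases blast+
qed

theorem mainTheorem1:
  shows "\<exists>(p :: nat \<Rightarrow> real \<times> real) (\<theta> :: nat \<Rightarrow> real).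
           (\<forall>i<510. house (p i) (\<theta> i) \<subseteq> trapezium) \<and>
           (\<forall>i<510. \<forall>j<510. i \<noteq> j \<longrightarrow>
              interior (house (p i) (\<theta> i)) \<inter> interior (house (p j) (\<theta> j)) = {})"
proof (rule packing_reindex)
  show "finite slots" by (simp add: slots_def)
  show "card slots = 510" by (rule card_slots)
  show "house (slot_corner s) (slot_angle s) \<subseteq> trapezium" if "s \<in> slots" for s
    using that house_slot slot_box_subset_trapezium by simp
  show "interior (house (slot_corner s) (slot_angle s)) \<inter>
          interior (house (slot_corner s') (slot_angle s')) = {}"
    if "s \<in> slots" "s' \<in> slots" "s \<noteq> s'" for s s'
    using that house_slot slot_boxes_interior_disjoint by simp
qed

end
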